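(* Let $\xi>0$ be real, let $b\ge0$ and $N\ge2$ be integers, and for integers $0\le d\le N-1$ and $0\le l\le 2d$ put \begin{equation*} f_{d,l} = \exp\left(\frac{(2b+1)(d^2+d)\xi}{2N}\right) \cdot 2\sinh\left(\frac{(2d+1)\xi}{2N}\right) \cdot \prod_{k=1}^{l}4 \sinh\left(\frac{(2d+1+k)\xi}{2N}\right) \sinh\left(\frac{(2d+1-k)\xi}{2N}\right). \end{equation*} Define $S:=(-1)^{N-1}\sum_{d=0}^{N-1}\sum_{l=0}^{2d}(-1)^{d}f_{d,l}$. Then \begin{equation*} S>(1-e^{-\xi/2})\sum_{l=0}^{2N-2}f_{N-1,l}. \end{equation*} *)

theory Defs
  imports Complex_Main
begin

definition f_dl :: "real \<Rightarrow> nat \<Rightarrow> nat \<Rightarrow> nat \<Rightarrow> nat \<Rightarrow> real" where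
  "f_dl \<xi> b N d l =
     exp ((2 * real b + 1) * (real d ^ 2 + real d) * \<xi> / (2 * real N))
     * (2 * sinh ((2 * real d + 1) * \<xi> / (2 * real N)))
     * (\<Prod>k = 1..l. 4 * sinh ((2 * real d + 1 + real k) * \<xi> / (2 * real N))
                     * sinh ((2 * real d + 1 - real k) * \<xi> / (2 * real N)))"

definition S_sum :: "real \<Rightarrow> nat \<Rightarrow> nat \<Rightarrow> real" where
  "S_sum \<xi> b N = (-1) ^ (N - 1) * (\<Sum>d = 0..N-1. \<Sum>l = 0..2*d. (-1) ^ d * f_dl \<xi> b N d l)"

end

theory Submission
  imports Defs
begin

text \<open>Write \<open>F d = \<Sum>l\<le>2d. f_{d,l}\<close>, so that \<open>S = (-1)^(N-1) \<Sum>d<N. (-1)^d F d\<close>.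
  Every factor of \<open>f_{d,l}\<close> is positive and grows with \<open>d\<close>, the exponential one by at least
  \<open>exp ((d+1) \<xi> / N)\<close>; since \<open>F (d+1)\<close> also has two more positive terms than \<open>F d\<close>,
  \<open>exp ((d+1) \<xi> / N) F d < F (d+1)\<close>. For an increasing nonnegative sequence the alternating
  sum \<open>(-1)^m \<Sum>d\<le>m. (-1)^d F d\<close> lies in \<open>[0, F m]\<close>, hence
  \<open>S \<ge> F (N-1) - F (N-2) > (1 - exp (-(N-1) \<xi> / N)) F (N-1)\<close>, and \<open>(N-1)/N \<ge> 1/2\<close>.\<close>

lemma alternating_sum_Suc:
  fixes F :: "nat \<Rightarrow> 'a::comm_ring_1"
  shows "(-1) ^ Suc m * (\<Sum>d = 0..Suc m. (-1) ^ d * F d)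
         = F (Suc m) - (-1) ^ m * (\<Sum>d = 0..m. (-1) ^ d * F d)"
  by (simp add: algebra_simps)

lemma alternating_sum_bounds:
  fixes F :: "nat \<Rightarrow> 'a::linordered_idom"
  assumes "incseq F" and "0 \<le> F 0"
  shows "0 \<le> (-1) ^ m * (\<Sum>d = 0..m. (-1) ^ d * F d)
         \<and> (-1) ^ m * (\<Sum>d = 0..m. (-1) ^ d * F d) \<le> F m"
proof (induction m)
  case 0
  then show ?case using assms(2) by simp
next
  case (Suc m)
  then show ?case
    unfolding alternating_sum_Suc using incseq_SucD[OF assms(1), of m] by simp
qed

lemma sinh_mult_sinh_pos:
  fixes c k x :: real
  assumes "\<bar>k\<bar> < c" and "0 < x"
  shows "0 < sinh ((c + k) * x) * sinh ((c - k) * x)"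
  using assms by (simp add: abs_less_iff)

lemma sinh_mult_sinh_mono:
  fixes c c' k x :: real
  assumes "\<bar>k\<bar> \<le> c" and "c \<le> c'" and "0 \<le> x"
  shows "sinh ((c + k) * x) * sinh ((c - k) * x) \<le> sinh ((c' + k) * x) * sinh ((c' - k) * x)"
  using assms by (intro mult_mono) (auto simp: abs_le_iff intro: mult_right_mono)

definition sinh_pair_prod :: "real \<Rightarrow> real \<Rightarrow> nat \<Rightarrow> real" where
  "sinh_pair_prod c x l = (\<Prod>k = 1..l. 4 * sinh ((c + real k) * x) * sinh ((c - real k) * x))"

lemma sinh_pair_prod_pos:
  assumes "real l < c" and "0 < x"
  shows "0 < sinh_pair_prod c x l"
  unfolding sinh_pair_prod_def using assms
  by (intro prod_pos) (auto simp: mult.assoc intro!: sinh_mult_sinh_pos)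

lemma sinh_pair_prod_mono:
  assumes "real l \<le> c" and "c \<le> c'" and "0 \<le> x"
  shows "sinh_pair_prod c x l \<le> sinh_pair_prod c' x l"
  unfolding sinh_pair_prod_def using assms
  by (intro prod_mono) (auto simp: mult.assoc intro!: sinh_mult_sinh_mono)

lemma f_dl_eq_sinh_pair_prod:
  "f_dl \<xi> b N d l =
     exp ((2 * real b + 1) * (real d ^ 2 + real d) * (\<xi> / (2 * real N)))
     * (2 * sinh ((2 * real d + 1) * (\<xi> / (2 * real N))))
     * sinh_pair_prod (2 * real d + 1) (\<xi> / (2 * real N)) l"
  unfolding f_dl_def sinh_pair_prod_def by simp

lemma f_dl_pos:
  assumes "0 < \<xi>" and "0 < N" and "l \<le> 2 * d"
  shows "0 < f_dl \<xi> b N d l"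
  unfolding f_dl_eq_sinh_pair_prod using assms by (simp add: sinh_pair_prod_pos)

lemma f_dl_Suc_ge:
  assumes "0 < \<xi>" and "0 < N" and "l \<le> 2 * d"
  shows "exp ((real d + 1) * \<xi> / real N) * f_dl \<xi> b N d l \<le> f_dl \<xi> b N (Suc d) l"
proof -
  define x where "x = \<xi> / (2 * real N)"
  have "0 < x" using assms by (simp add: x_def)
  have "(real d + 1) * \<xi> / real N = 2 * (real d + 1) * x"
    using assms by (simp add: x_def field_simps)
  moreover have "2 * (real d + 1) * x \<le> (2 * real b + 1) * (2 * (real d + 1)) * x"
    using \<open>0 < x\<close> by (intro mult_right_mono) auto
  ultimately have exp_le:
    "exp ((real d + 1) * \<xi> / real N) * exp ((2 * real b + 1) * (real d ^ 2 + real d) * x)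
     \<le> exp ((2 * real b + 1) * (real (Suc d) ^ 2 + real (Suc d)) * x)"
    by (simp add: exp_add[symmetric] power2_eq_square algebra_simps)
  have prod_le: "sinh_pair_prod (2 * real d + 1) x l \<le> sinh_pair_prod (2 * real (Suc d) + 1) x l"
    using assms(3) \<open>0 < x\<close> by (intro sinh_pair_prod_mono) auto
  have "0 < sinh_pair_prod (2 * real d + 1) x l"
    using assms(3) \<open>0 < x\<close> by (intro sinh_pair_prod_pos) auto
  then show ?thesis
    unfolding f_dl_eq_sinh_pair_prod x_def[symmetric] mult.assoc[symmetric]
    using exp_le prod_le \<open>0 < x\<close>
    by (intro mult_mono) (auto intro: mult_right_mono)
qed

definition f_row_sum :: "real \<Rightarrow> nat \<Rightarrow> nat \<Rightarrow> nat \<Rightarrow> real" where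
  "f_row_sum \<xi> b N d = (\<Sum>l = 0..2 * d. f_dl \<xi> b N d l)"

lemma f_row_sum_pos:
  assumes "0 < \<xi>" and "0 < N"
  shows "0 < f_row_sum \<xi> b N d"
  unfolding f_row_sum_def using assms by (intro sum_pos) (auto intro: f_dl_pos)

lemma f_row_sum_Suc_gt:
  assumes "0 < \<xi>" and "0 < N"
  shows "exp ((real d + 1) * \<xi> / real N) * f_row_sum \<xi> b N d < f_row_sum \<xi> b N (Suc d)"
proof -
  have "exp ((real d + 1) * \<xi> / real N) * f_row_sum \<xi> b N d
        \<le> (\<Sum>l = 0..2 * d. f_dl \<xi> b N (Suc d) l)"
    unfolding f_row_sum_def sum_distrib_left
    using assms by (intro sum_mono f_dl_Suc_ge) auto
  also have "\<dots> < (\<Sum>l = 0..2 * d. f_dl \<xi> b N (Suc d) l)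
                   + f_dl \<xi> b N (Suc d) (2 * d + 1) + f_dl \<xi> b N (Suc d) (2 * d + 2)"
    using f_dl_pos[OF assms, of "2 * d + 1" "Suc d" b] f_dl_pos[OF assms, of "2 * d + 2" "Suc d" b]
    by simp
  also have "\<dots> = f_row_sum \<xi> b N (Suc d)"
    unfolding f_row_sum_def by (simp add: sum.atLeast0_atMost_Suc)
  finally show ?thesis .
qed

lemma incseq_f_row_sum:
  assumes "0 < \<xi>" and "0 < N"
  shows "incseq (f_row_sum \<xi> b N)"
proof (rule incseq_SucI)
  fix d
  have "f_row_sum \<xi> b N d \<le> exp ((real d + 1) * \<xi> / real N) * f_row_sum \<xi> b N d"
    using assms f_row_sum_pos[OF assms] by simp
  then show "f_row_sum \<xi> b N d \<le> f_row_sum \<xi> b N (Suc d)"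
    using f_row_sum_Suc_gt[OF assms] by (meson order.trans less_imp_le)
qed

lemma S_sum_eq_alternating_row_sums:
  "S_sum \<xi> b N = (-1) ^ (N - 1) * (\<Sum>d = 0..N - 1. (-1) ^ d * f_row_sum \<xi> b N d)"
  unfolding S_sum_def f_row_sum_def by (simp add: sum_distrib_left)

theorem lemma3p3:
  fixes \<xi> :: real and b N :: nat
  assumes "\<xi> > 0" and "N \<ge> 2"
  shows "S_sum \<xi> b N > (1 - exp (- \<xi> / 2)) * (\<Sum>l = 0..2*N-2. f_dl \<xi> b N (N - 1) l)"
proof -
  obtain m where m: "N = Suc (Suc m)"
    using assms(2) by (metis add_2_eq_Suc le_Suc_ex)
  have N_pos: "0 < N" using m by simp
  let ?F = "f_row_sum \<xi> b N"
  have "\<xi> / 2 \<le> (real m + 1) * \<xi> / real N"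
    using assms(1) m by (simp add: field_simps)
  then have "exp (\<xi> / 2) * ?F m \<le> exp ((real m + 1) * \<xi> / real N) * ?F m"
    using f_row_sum_pos[OF assms(1) N_pos] by simp
  also have "\<dots> < ?F (Suc m)"
    by (rule f_row_sum_Suc_gt[OF assms(1) N_pos])
  finally have "?F m < exp (- \<xi> / 2) * ?F (Suc m)"
    by (simp add: exp_minus field_simps)
  moreover have "(-1) ^ m * (\<Sum>d = 0..m. (-1) ^ d * ?F d) \<le> ?F m"
    using alternating_sum_bounds[OF incseq_f_row_sum[OF assms(1) N_pos]]
      f_row_sum_pos[OF assms(1) N_pos] less_imp_le by blast
  moreover have "S_sum \<xi> b N = ?F (Suc m) - (-1) ^ m * (\<Sum>d = 0..m. (-1) ^ d * ?F d)"
    unfolding S_sum_eq_alternating_row_sums m alternating_sum_Suc[symmetric] by simp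
  moreover have "(\<Sum>l = 0..2*N-2. f_dl \<xi> b N (N - 1) l) = ?F (Suc m)"
    unfolding f_row_sum_def m by simp
  ultimately show ?thesis by (simp add: algebra_simps)
qed

end
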